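(* Let $\mathfrak{g}$, $R$, $J$, $B\otimes B=R/J$ and, for a homogeneous invariant $F\in (S\mathfrak{g})^{\mathfrak{g}}$ of degree $\ge 2$, the element $\widehat F\in R/J$ be as in the context. Let $F,H\in (S\mathfrak{g})^{\mathfrak{g}}$ be homogeneous invariants of positive degrees. Then $\widehat{FH}=0$ in $R/J$.
   Context: Let $\mathfrak{g}$ be a simple finite-dimensional complex Lie algebra with a fixed nondegenerate invariant symmetric bilinear form, used to identify $\mathfrak{g}$ with $\mathfrak{g}^*$ (so $S\mathfrak{g}$ is identified with polynomial functions on $\mathfrak{g}$). Let $n=\dim\mathfrak{g}$ and let $e_1,\dots,e_n$ be a basis of $\mathfrak{g}$ orthonormal for the form, with corresponding coordinates $z_1,\dots,z_n$ on $\mathfrak{g}$. Let $R$ be the exterior (Grassmann) algebra over $\mathbb{C}$ on odd generators $x_1,\dots,x_n,y_1,\dots,y_n$ (so $R\cong\wedge(\mathfrak{g}\oplus\mathfrak{g})$, the algebra of functions on $\Pi\mathfrak{g}\times\Pi\mathfrak{g}$), bigraded with $x_a$ of degree $(1,0)$ and $y_a$ of degree $(0,1)$, and with $\mathfrak{g}$ acting by derivations so that $(x_a)$ and $(y_a)$ transform as coordinates of two copies of $\mathfrak{g}$. Put $X=\sum_a x_a e_a$, $Y=\sum_a y_a e_a\in R\otimes\mathfrak{g}$, and for $U=\sum_a u_ae_a$, $V=\sum_a v_ae_a$ with $u_a,v_a$ odd elements of $R$ set $\{U,V\}=\sum_{a,b}u_av_b[e_a,e_b]\in R\otimes\mathfrak{g}$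 (this equals $UV+VU$ computed in $R\otimes U(\mathfrak{g})$). Let $J\subset R$ be the ideal generated by the coefficients (of $e_1,\dots,e_n$) of $\{X,X\}$ and of $\{Y,Y\}$; then $R/J\cong B\otimes B$, where $B$ is the quotient of $\wedge\mathfrak{g}$ by the ideal generated by the coefficients of $\{X,X\}$. For a homogeneous $F\in(S\mathfrak{g})^{\mathfrak{g}}$ of degree $k\ge 2$, viewed as a polynomial $F(z_1,\dots,z_n)$, define $$\widehat F=\sum_{a,b=1}^n \frac{\partial^2F}{\partial z_a\partial z_b}(\{X,Y\})\,x_a y_b\in R/J,$$ where $\frac{\partial^2F}{\partial z_a\partial z_b}(\{X,Y\})$ means substituting for $z_c$ the (even) coefficient of $e_c$ in $\{X,Y\}$. (Equivalently: view $F$ as an element of $S^{k-2}\mathfrak{g}\otimes S^2\mathfrak{g}$, apply the first factor to $\{X,Y\}$ and the second to $X\otimes Y$.) The element $\widehat F$ is $\mathfrak{g}$-invariant of bidegree $(k-1,k-1)$. *)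

theory Defs
  imports Complex_Main "HOL-Library.Poly_Mapping"
begin

text \<open>g has basis e_0,...,e_(n-1), orthonormal for the fixed invariant form,
  and [e_a, e_b] = sum_k c a b k e_k.\<close>

definition lie_vecs :: "nat \<Rightarrow> (nat \<Rightarrow> complex) set" where
  "lie_vecs n = {v. \<forall>i. n \<le> i \<longrightarrow> v i = 0}"

definition lie_ad :: "nat \<Rightarrow> (nat \<Rightarrow> nat \<Rightarrow> nat \<Rightarrow> complex) \<Rightarrow> nat \<Rightarrow> (nat \<Rightarrow> complex) \<Rightarrow> (nat \<Rightarrow> complex)" where
  "lie_ad n c a v = (\<lambda>k. if k < n then (\<Sum>b<n. v b * c a b k) else 0)"

definition lie_ideal :: "nat \<Rightarrow> (nat \<Rightarrow> nat \<Rightarrow> nat \<Rightarrow> complex) \<Rightarrow> (nat \<Rightarrow> complex) set \<Rightarrow> bool" where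
  "lie_ideal n c V \<longleftrightarrow> V \<subseteq> lie_vecs n \<and> (\<lambda>_. 0) \<in> V
     \<and> (\<forall>v\<in>V. \<forall>w\<in>V. (\<lambda>i. v i + w i) \<in> V)
     \<and> (\<forall>v\<in>V. \<forall>t. (\<lambda>i. t * v i) \<in> V)
     \<and> (\<forall>v\<in>V. \<forall>a<n. lie_ad n c a v \<in> V)"

text \<open>Simple complex Lie algebra with an invariant nondegenerate symmetric form
  for which the basis is orthonormal (invariance: ([e_a,e_b],e_k) = -(e_b,[e_a,e_k])).\<close>
definition simple_quadratic_lie :: "nat \<Rightarrow> (nat \<Rightarrow> nat \<Rightarrow> nat \<Rightarrow> complex) \<Rightarrow> bool" where
  "simple_quadratic_lie n c \<longleftrightarrow>
     (\<forall>a<n. \<forall>b<n. \<forall>k<n. c a b k = - c b a k)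
   \<and> (\<forall>a<n. \<forall>b<n. \<forall>d<n. \<forall>m<n.
        (\<Sum>k<n. c a b k * c k d m + c b d k * c k a m + c d a k * c k b m) = 0)
   \<and> (\<forall>a<n. \<forall>b<n. \<forall>k<n. c a b k = - c a k b)
   \<and> (\<exists>a<n. \<exists>b<n. \<exists>k<n. c a b k \<noteq> 0)
   \<and> (\<forall>V. lie_ideal n c V \<longrightarrow> V = {\<lambda>_. 0} \<or> V = lie_vecs n)"

section \<open>Polynomials on g (elements of S g) in the coordinates z_0..z_(n-1)\<close>

type_synonym cpoly = "(nat \<Rightarrow>\<^sub>0 nat) \<Rightarrow>\<^sub>0 complex"

definition pvar :: "nat \<Rightarrow> cpoly" where
  "pvar i = Poly_Mapping.single (Poly_Mapping.single i 1) 1"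

definition pconst :: "complex \<Rightarrow> cpoly" where
  "pconst t = Poly_Mapping.single 0 t"

definition pdiff :: "nat \<Rightarrow> cpoly \<Rightarrow> cpoly" where
  "pdiff i P = (\<Sum>\<alpha>\<in>Poly_Mapping.keys P. Poly_Mapping.single (\<alpha> - Poly_Mapping.single i (1::nat))
                                (of_nat (Poly_Mapping.lookup \<alpha> i) * Poly_Mapping.lookup P \<alpha> :: complex))"

definition poly_in_vars :: "nat \<Rightarrow> cpoly \<Rightarrow> bool" where
  "poly_in_vars n P \<longleftrightarrow> (\<forall>\<alpha>\<in>Poly_Mapping.keys P. Poly_Mapping.keys \<alpha> \<subseteq> {..<n})"

definition homogeneous :: "nat \<Rightarrow> cpoly \<Rightarrow> bool" where
  "homogeneous d P \<longleftrightarrow> (\<forall>\<alpha>\<in>Poly_Mapping.keys P. (\<Sum>i\<in>Poly_Mapping.keys \<alpha>. Poly_Mapping.lookup \<alpha> i) = d)"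

text \<open>g-invariance: e_a . P = 0 for every basis vector, i.e.
  sum_{b,k} c a k b z_k dP/dz_b = 0 (infinitesimal coadjoint invariance).\<close>
definition invariant_poly :: "nat \<Rightarrow> (nat \<Rightarrow> nat \<Rightarrow> nat \<Rightarrow> complex) \<Rightarrow> cpoly \<Rightarrow> bool" where
  "invariant_poly n c P \<longleftrightarrow> poly_in_vars n P \<and>
     (\<forall>a<n. (\<Sum>b<n. \<Sum>k<n. pconst (c a k b) * pvar k * pdiff b P) = 0)"

section \<open>The Grassmann algebra R on generators x_a = gen a, y_a = gen (n+a), a < n\<close>

text \<open>Elements are coefficient functions on subsets of generators (monomials
  in increasing order of generators).\<close>
type_synonym grass = "nat set \<Rightarrow> complex"

definition gsign :: "nat set \<Rightarrow> nat set \<Rightarrow> complex" where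
  "gsign A B = (-1) ^ card {(a, b). a \<in> A \<and> b \<in> B \<and> b < a}"

definition gmul :: "grass \<Rightarrow> grass \<Rightarrow> grass" where
  "gmul u v = (\<lambda>S. \<Sum>A\<in>Pow S. gsign A (S - A) * u A * v (S - A))"

definition gadd :: "grass \<Rightarrow> grass \<Rightarrow> grass" where
  "gadd u v = (\<lambda>S. u S + v S)"

definition gscale :: "complex \<Rightarrow> grass \<Rightarrow> grass" where
  "gscale t u = (\<lambda>S. t * u S)"

definition gzero :: grass where "gzero = (\<lambda>S. 0)"

definition gone :: grass where "gone = (\<lambda>S. if S = {} then 1 else 0)"

definition gsum :: "('i \<Rightarrow> grass) \<Rightarrow> 'i set \<Rightarrow> grass" where
  "gsum f I = (\<lambda>S. \<Sum>i\<in>I. f i S)"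

definition gen :: "nat \<Rightarrow> grass" where
  "gen i = (\<lambda>S. if S = {i} then 1 else 0)"

definition gpow :: "grass \<Rightarrow> nat \<Rightarrow> grass" where
  "gpow u k = (gmul u ^^ k) gone"

definition Rgr :: "nat \<Rightarrow> grass set" where
  "Rgr n = {u. \<forall>S. u S \<noteq> 0 \<longrightarrow> S \<subseteq> {..<2*n}}"

inductive_set gideal :: "nat \<Rightarrow> grass set \<Rightarrow> grass set" for n G where
  gen_in: "g \<in> G \<Longrightarrow> g \<in> gideal n G"
| zero_in: "gzero \<in> gideal n G"
| add_in: "u \<in> gideal n G \<Longrightarrow> v \<in> gideal n G \<Longrightarrow> gadd u v \<in> gideal n G"
| lmul_in: "r \<in> Rgr n \<Longrightarrow> u \<in> gideal n G \<Longrightarrow> gmul r u \<in> gideal n G"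
| rmul_in: "r \<in> Rgr n \<Longrightarrow> u \<in> gideal n G \<Longrightarrow> gmul u r \<in> gideal n G"

text \<open>coefficient of e_k in {U,V} for U = sum u_a e_a, V = sum v_b e_b\<close>
definition gbracket :: "nat \<Rightarrow> (nat \<Rightarrow> nat \<Rightarrow> nat \<Rightarrow> complex) \<Rightarrow> (nat \<Rightarrow> grass) \<Rightarrow> (nat \<Rightarrow> grass) \<Rightarrow> nat \<Rightarrow> grass" where
  "gbracket n c u v k = gsum (\<lambda>(a, b). gscale (c a b k) (gmul (u a) (v b))) ({..<n} \<times> {..<n})"

definition xgen :: "nat \<Rightarrow> nat \<Rightarrow> grass" where "xgen n a = gen a"
definition ygen :: "nat \<Rightarrow> nat \<Rightarrow> grass" where "ygen n a = gen (n + a)"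

text \<open>J: ideal generated by the coefficients of {X,X} and {Y,Y}\<close>
definition Jideal :: "nat \<Rightarrow> (nat \<Rightarrow> nat \<Rightarrow> nat \<Rightarrow> complex) \<Rightarrow> grass set" where
  "Jideal n c = gideal n ((\<lambda>k. gbracket n c (xgen n) (xgen n) k) ` {..<n}
                          \<union> (\<lambda>k. gbracket n c (ygen n) (ygen n) k) ` {..<n})"

text \<open>substitute (commuting, even) Grassmann elements w_0..w_(n-1) for z_0..z_(n-1)\<close>
definition geval :: "nat \<Rightarrow> cpoly \<Rightarrow> (nat \<Rightarrow> grass) \<Rightarrow> grass" where
  "geval n P w = gsum (\<lambda>\<alpha>. gscale (Poly_Mapping.lookup P \<alpha>)
      (fold (\<lambda>i acc. gmul acc (gpow (w i) (Poly_Mapping.lookup \<alpha> i))) [0..<n] gone)) (Poly_Mapping.keys P)"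

definition Fhat :: "nat \<Rightarrow> (nat \<Rightarrow> nat \<Rightarrow> nat \<Rightarrow> complex) \<Rightarrow> cpoly \<Rightarrow> grass" where
  "Fhat n c F = gsum (\<lambda>(a, b). gmul (gmul (geval n (pdiff a (pdiff b F)) (gbracket n c (xgen n) (ygen n)))
                                           (xgen n a)) (ygen n b))
                      ({..<n} \<times> {..<n})"

end

theory Submission
  imports Defs
begin

text \<open>Write \<open>Z = {X, Y}\<close> and \<open>\<Phi>(P) = P(Z)\<close>. Each \<open>Z\<^sub>k\<close> is a sum of products of two generators,
  so it commutes with every generator and \<open>\<Phi>\<close> is a ring homomorphism. By the Leibniz rule,
  \<open>Fhat(FH) = \<Phi>(H) Fhat(F) + \<Phi>(F) Fhat(H) + \<Sum>\<^sub>b \<Phi>(\<partial>\<^sub>b F) (\<Sum>\<^sub>a \<Phi>(\<partial>\<^sub>a H) x\<^sub>a) y\<^sub>b + (F \<leftrightarrow> H)\<close>,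
  so it suffices that \<open>\<Phi>(F)\<close> and \<open>\<Sum>\<^sub>b \<Phi>(\<partial>\<^sub>b F) x\<^sub>b\<close> lie in \<open>J\<close> for every homogeneous invariant
  \<open>F\<close> of degree \<open>d > 0\<close>. Euler's identity writes \<open>d \<Phi>(F)\<close> and \<open>(d - 1) \<Phi>(\<partial>\<^sub>b F)\<close> as
  \<open>\<Sum>\<^sub>m Z\<^sub>m \<Phi>(\<partial>\<^sub>m G)\<close> with \<open>G = F\<close> resp. \<open>G = \<partial>\<^sub>b F\<close>; expanding \<open>Z\<^sub>m\<close> and using the invariance
  of \<open>F\<close>, this becomes a combination of the coefficients of \<open>{X, X}\<close> and of
  \<open>{X, {X, Y}} = \<onehalf> {{X, X}, Y}\<close> (the Jacobi identity for odd \<open>X\<close>), all of which lie in \<open>J\<close>.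
  In degree one the second claim uses simplicity: a linear invariant is a central element of the
  Lie algebra, hence zero.\<close>

section \<open>The exterior algebra as a ring\<close>

lemma gsign_Un_left:
  assumes "finite B" "finite C" "finite D" "B \<inter> C = {}"
  shows "gsign (B \<union> C) D = gsign B D * gsign C D"
proof -
  let ?inv = "\<lambda>A. {(a, b). a \<in> A \<and> b \<in> D \<and> b < a}"
  have "?inv (B \<union> C) = ?inv B \<union> ?inv C" by auto
  moreover have "finite (?inv A)" if "finite A" for A
    using that assms(3) by (auto intro: finite_subset[of _ "A \<times> D"])
  moreover have "?inv B \<inter> ?inv C = {}" using assms(4) by auto
  ultimately show ?thesis
    using assms(1,2) by (simp add: gsign_def card_Un_disjoint power_add)
qed

lemma gsign_Un_right:
  assumes "finite B" "finite C" "finite D" "C \<inter> D = {}"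
  shows "gsign B (C \<union> D) = gsign B C * gsign B D"
proof -
  let ?inv = "\<lambda>A. {(a, b). a \<in> B \<and> b \<in> A \<and> b < a}"
  have "?inv (C \<union> D) = ?inv C \<union> ?inv D" by auto
  moreover have "finite (?inv A)" if "finite A" for A
    using that assms(1) by (auto intro: finite_subset[of _ "B \<times> A"])
  moreover have "?inv C \<inter> ?inv D = {}" using assms(4) by auto
  ultimately show ?thesis
    using assms(2,3) by (simp add: gsign_def card_Un_disjoint power_add)
qed

lemma gsign_empty [simp]: "gsign {} B = 1" "gsign A {} = 1"
  by (simp_all add: gsign_def)

lemma gmul_infinite: "infinite S \<Longrightarrow> gmul u v S = 0"
  by (simp add: gmul_def)

lemma gsign_cocycle:
  assumes "finite S" "B \<subseteq> S" "C \<subseteq> S - B"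
  shows "gsign (B \<union> C) (S - (B \<union> C)) * gsign B C = gsign B (S - B) * gsign C (S - B - C)"
proof -
  have fins: "finite B" "finite C" "finite (S - B - C)"
    using assms by (auto intro: finite_subset)
  have sets: "S - (B \<union> C) = S - B - C" "C \<union> (S - B - C) = S - B" "B \<inter> C = {}"
    using assms by auto
  show ?thesis
    unfolding sets(1)
    using gsign_Un_left[OF fins(1-3) sets(3)] gsign_Un_right[OF fins, unfolded sets(2)]
    by (simp add: mult_ac)
qed

lemma gmul_assoc: "gmul (gmul u v) w = gmul u (gmul v w)"
proof
  fix S
  show "gmul (gmul u v) w S = gmul u (gmul v w) S"
  proof (cases "finite S")
    case False
    then show ?thesis by (simp add: gmul_infinite)
  next
    case fin: True
    let ?f = "\<lambda>A B. gsign A (S - A) * (gsign B (A - B) * u B * v (A - B)) * w (S - A)"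
    let ?g = "\<lambda>B C. gsign B (S - B) * (u B * (gsign C (S - B - C) * v C * w (S - B - C)))"
    have "gmul (gmul u v) w S = (\<Sum>A\<in>Pow S. \<Sum>B\<in>Pow A. ?f A B)"
      by (simp add: gmul_def sum_distrib_left sum_distrib_right)
    also have "\<dots> = (\<Sum>(A, B)\<in>Sigma (Pow S) Pow. ?f A B)"
      by (rule sum.Sigma) (use fin in \<open>auto intro: finite_subset\<close>)
    also have "\<dots> = (\<Sum>(B, C)\<in>Sigma (Pow S) (\<lambda>B. Pow (S - B)). ?g B C)"
    proof (rule sum.reindex_bij_witness[where i="\<lambda>(B, C). (B \<union> C, B)" and j="\<lambda>(A, B). (B, A - B)"])
      fix p assume "p \<in> Sigma (Pow S) Pow"
      then obtain A B where p: "p = (A, B)" and "B \<subseteq> A" "A \<subseteq> S" by auto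
      then have "B \<subseteq> S" "A - B \<subseteq> S - B" "B \<union> (A - B) = A" by auto
      then have "gsign A (S - A) * gsign B (A - B) = gsign B (S - B) * gsign (A - B) (S - B - (A - B))"
        using gsign_cocycle[OF fin, of B "A - B"] by simp
      moreover have "S - B - (A - B) = S - A" using \<open>B \<subseteq> A\<close> by auto
      ultimately show "(case (case p of (A, B) \<Rightarrow> (B, A - B)) of (B, C) \<Rightarrow> ?g B C)
          = (case p of (A, B) \<Rightarrow> ?f A B)"
        by (simp add: p mult_ac)
    qed auto
    also have "\<dots> = gmul u (gmul v w) S"
      by (simp add: gmul_def sum_distrib_left sum.Sigma[symmetric] fin mult.assoc)
    finally show ?thesis .
  qed
qed

lemma gmul_const_left:
  "finite S \<Longrightarrow> gmul (\<lambda>T. if T = {} then t else 0) u S = t * u S"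
proof -
  assume "finite S"
  have "gmul (\<lambda>T. if T = {} then t else 0) u S = (\<Sum>A\<in>Pow S. if A = {} then t * u S else 0)"
    unfolding gmul_def by (rule sum.cong) auto
  with \<open>finite S\<close> show ?thesis by (simp add: sum.delta)
qed

lemma gmul_const_right:
  "finite S \<Longrightarrow> gmul u (\<lambda>T. if T = {} then t else 0) S = t * u S"
proof -
  assume "finite S"
  have "gmul u (\<lambda>T. if T = {} then t else 0) S = (\<Sum>A\<in>Pow S. if A = S then t * u S else 0)"
    unfolding gmul_def by (rule sum.cong) auto
  with \<open>finite S\<close> show ?thesis by (simp add: sum.delta)
qed

lemma gmul_gone:
  assumes "\<forall>S. infinite S \<longrightarrow> u S = 0"
  shows "gmul gone u = u" "gmul u gone = u"
proof -
  have "gmul gone u S = u S \<and> gmul u gone S = u S" for S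
    using assms by (cases "finite S") (simp_all add: gone_def gmul_const_left gmul_const_right gmul_infinite)
  then show "gmul gone u = u" "gmul u gone = u" by auto
qed

text \<open>Coefficient functions vanishing on infinite sets form a ring under \<open>gmul\<close> that contains
  \<open>Rgr n\<close>.\<close>
typedef grassmann = "{u::grass. \<forall>S. infinite S \<longrightarrow> u S = 0}"
  morphisms grass_of Abs_grassmann
  by (rule exI[of _ "\<lambda>_. 0"]) auto

setup_lifting type_definition_grassmann

lemma grass_of_infinite: "infinite S \<Longrightarrow> grass_of a S = 0"
  using grass_of[of a] by auto

instantiation grassmann :: ring_1
begin
lift_definition zero_grassmann :: grassmann is gzero by (simp add: gzero_def)
lift_definition one_grassmann :: grassmann is gone by (auto simp: gone_def)
lift_definition plus_grassmann :: "grassmann \<Rightarrow> grassmann \<Rightarrow> grassmann" is gadd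
  by (simp add: gadd_def)
lift_definition uminus_grassmann :: "grassmann \<Rightarrow> grassmann" is "\<lambda>u S. - u S" by simp
lift_definition minus_grassmann :: "grassmann \<Rightarrow> grassmann \<Rightarrow> grassmann" is "\<lambda>u v S. u S - v S"
  by simp
lift_definition times_grassmann :: "grassmann \<Rightarrow> grassmann \<Rightarrow> grassmann" is gmul
  by (simp add: gmul_infinite)
instance
proof
  fix a b c :: grassmann
  show "a * b * c = a * (b * c)" by transfer (rule gmul_assoc)
  show "a + b + c = a + (b + c)" by transfer (simp add: gadd_def add.assoc)
  show "a + b = b + a" by transfer (simp add: gadd_def add.commute)
  show "0 + a = a" by transfer (simp add: gadd_def gzero_def)
  show "- a + a = 0" by transfer (simp add: gadd_def gzero_def)
  show "a - b = a + - b" by transfer (simp add: gadd_def)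
  show "(a + b) * c = a * c + b * c"
    by transfer (simp add: gadd_def gmul_def distrib_left distrib_right sum.distrib fun_eq_iff)
  show "a * (b + c) = a * b + a * c"
    by transfer (simp add: gadd_def gmul_def distrib_left distrib_right sum.distrib fun_eq_iff)
  show "1 * a = a" by transfer (rule gmul_gone(1))
  show "a * 1 = a" by transfer (rule gmul_gone(2))
  show "(0::grassmann) \<noteq> 1" by transfer (simp add: gzero_def gone_def fun_eq_iff)
qed
end

lift_definition scalar :: "complex \<Rightarrow> grassmann" is "\<lambda>t S. if S = {} then t else 0"
  by auto

lift_definition generator :: "nat \<Rightarrow> grassmann" is gen
  by (auto simp: gen_def)

lemma grass_of_plus: "grass_of (a + b) = gadd (grass_of a) (grass_of b)"
  by (simp add: plus_grassmann.rep_eq)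

lemma grass_of_times: "grass_of (a * b) = gmul (grass_of a) (grass_of b)"
  by (simp add: times_grassmann.rep_eq)

lemma grass_of_sum: "grass_of (sum f I) = gsum (\<lambda>i. grass_of (f i)) I"
  by (induction I rule: infinite_finite_induct)
    (simp_all add: gsum_def zero_grassmann.rep_eq gzero_def grass_of_plus gadd_def)

lemma grass_of_power: "grass_of (a ^ k) = gpow (grass_of a) k"
  by (induction k) (simp_all add: gpow_def one_grassmann.rep_eq grass_of_times)

lemma grass_of_scalar_mult: "grass_of (scalar t * a) = gscale t (grass_of a)"
proof
  fix S
  show "grass_of (scalar t * a) S = gscale t (grass_of a) S"
    by (cases "finite S")
      (simp_all add: grass_of_times scalar.rep_eq gscale_def gmul_const_left gmul_infinite
        grass_of_infinite)
qed

lemma scalar_mult_commute: "scalar t * a = a * scalar t"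
proof -
  have "grass_of (scalar t * a) S = grass_of (a * scalar t) S" for S
    by (cases "finite S") (simp_all add: grass_of_times scalar.rep_eq gmul_const_left
        gmul_const_right gmul_infinite)
  then show ?thesis by (simp add: grass_of_inject[symmetric] fun_eq_iff)
qed

lemma mult_scalar_left_commute: "a * (scalar t * b) = scalar t * (a * b)"
  by (metis mult.assoc scalar_mult_commute)

lemma scalar_add: "scalar (s + t) = scalar s + scalar t"
  by transfer (auto simp: gadd_def)

lemma scalar_0 [simp]: "scalar 0 = 0"
  by transfer (auto simp: gzero_def)

lemma scalar_1 [simp]: "scalar 1 = 1"
  by transfer (auto simp: gone_def)

lemma scalar_mult: "scalar (s * t) = scalar s * scalar t"
proof -
  have "grass_of (scalar (s * t)) = grass_of (scalar s * scalar t)"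
    by (simp add: grass_of_scalar_mult gscale_def scalar.rep_eq fun_eq_iff)
  then show ?thesis by (simp add: grass_of_inject)
qed

lemma scalar_minus: "scalar (- t) = - scalar t"
  by transfer auto

lemma scalar_diff: "scalar (s - t) = scalar s - scalar t"
  by (simp only: diff_conv_add_uminus scalar_add scalar_minus)

lemma scalar_sum: "scalar (sum f I) = (\<Sum>i\<in>I. scalar (f i))"
  by (induction I rule: infinite_finite_induct) (auto simp: scalar_add)

lemma scalar_of_nat: "scalar (of_nat k) = of_nat k"
  by (induction k) (auto simp: scalar_add)

lemma scalar_mult_scalar_mult: "scalar s * (scalar t * a) = scalar (s * t) * a"
  by (simp only: scalar_mult mult.assoc)

lemma scalar_mult_mult_scalar_mult: "scalar s * a * (scalar t * b) = scalar (s * t) * (a * b)"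
  by (simp only: mult.assoc mult_scalar_left_commute[of a] scalar_mult_scalar_mult)

lemma gmul_gen_gen:
  "gmul (gen i) (gen j) = (\<lambda>S. if S = {i, j} \<and> i \<noteq> j then (if j < i then -1 else 1) else 0)"
proof
  fix S
  show "gmul (gen i) (gen j) S = (if S = {i, j} \<and> i \<noteq> j then (if j < i then -1 else 1) else 0)"
  proof (cases "finite S")
    case True
    have "gmul (gen i) (gen j) S = (\<Sum>A\<in>Pow S. if A = {i} then (if S - {i} = {j} then gsign {i} {j} else 0) else 0)"
      unfolding gmul_def gen_def by (rule sum.cong) auto
    also have "\<dots> = (if {i} \<subseteq> S \<and> S - {i} = {j} then gsign {i} {j} else 0)"
      using True by (simp add: sum.delta)
    also have "gsign {i} {j} = (if j < i then -1 else 1)"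
    proof -
      have "{(a, b). a \<in> {i} \<and> b \<in> {j} \<and> b < a} = (if j < i then {(i, j)} else {})" by auto
      then show ?thesis by (simp add: gsign_def)
    qed
    also have "({i} \<subseteq> S \<and> S - {i} = {j}) = (S = {i, j} \<and> i \<noteq> j)" by auto
    finally show ?thesis .
  qed (auto simp: gmul_infinite)
qed

lemma generator_anticommute: "generator i * generator j = - (generator j * generator i)"
  by transfer (auto simp: gmul_gen_gen fun_eq_iff insert_commute)

lemma generator_left_anticommute: "generator i * (generator j * z) = - (generator j * (generator i * z))"
  by (simp add: mult.assoc[symmetric] generator_anticommute[of i j])

abbreviation xvar :: "nat \<Rightarrow> grassmann" where "xvar \<equiv> generator"

abbreviation yvar :: "nat \<Rightarrow> nat \<Rightarrow> grassmann" where "yvar n b \<equiv> generator (n + b)"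

definition in_R :: "nat \<Rightarrow> grassmann \<Rightarrow> bool" where
  "in_R n u \<longleftrightarrow> grass_of u \<in> Rgr n"

lemma in_R_scalar [simp]: "in_R n (scalar t)"
  by (simp add: in_R_def Rgr_def scalar.rep_eq)

lemma in_R_generator: "i < 2 * n \<Longrightarrow> in_R n (generator i)"
  by (simp add: in_R_def Rgr_def generator.rep_eq gen_def)

lemma in_R_0 [simp]: "in_R n 0" and in_R_1 [simp]: "in_R n 1"
  using in_R_scalar[of n 0] in_R_scalar[of n 1] by simp_all

lemma in_R_add:
  assumes "in_R n a" "in_R n b"
  shows "in_R n (a + b)"
  unfolding in_R_def Rgr_def
proof (intro CollectI allI impI)
  fix S assume "grass_of (a + b) S \<noteq> 0"
  then have "grass_of a S \<noteq> 0 \<or> grass_of b S \<noteq> 0" by (auto simp: grass_of_plus gadd_def)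
  with assms show "S \<subseteq> {..<2 * n}" by (auto simp: in_R_def Rgr_def)
qed

lemma in_R_mult:
  assumes "in_R n a" "in_R n b"
  shows "in_R n (a * b)"
  unfolding in_R_def Rgr_def
proof (intro CollectI allI impI)
  fix S assume "grass_of (a * b) S \<noteq> 0"
  then have "(\<Sum>A\<in>Pow S. gsign A (S - A) * grass_of a A * grass_of b (S - A)) \<noteq> 0"
    by (simp add: grass_of_times gmul_def)
  then obtain A where "A \<subseteq> S" "grass_of a A \<noteq> 0" "grass_of b (S - A) \<noteq> 0"
    by (metis (no_types, lifting) PowD mult_eq_0_iff sum.neutral)
  with assms show "S \<subseteq> {..<2 * n}" by (auto simp: in_R_def Rgr_def)
qed

lemma in_R_sum: "(\<And>i. i \<in> I \<Longrightarrow> in_R n (f i)) \<Longrightarrow> in_R n (sum f I)"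
  by (induction I rule: infinite_finite_induct) (auto intro: in_R_add)

lemma in_R_power: "in_R n a \<Longrightarrow> in_R n (a ^ k)"
  by (induction k) (auto intro: in_R_mult)

definition in_J :: "nat \<Rightarrow> (nat \<Rightarrow> nat \<Rightarrow> nat \<Rightarrow> complex) \<Rightarrow> grassmann \<Rightarrow> bool" where
  "in_J n c u \<longleftrightarrow> grass_of u \<in> Jideal n c"

lemma in_J_add: "in_J n c a \<Longrightarrow> in_J n c b \<Longrightarrow> in_J n c (a + b)"
  by (simp add: in_J_def Jideal_def grass_of_plus gideal.add_in)

lemma in_J_mult_left: "in_R n r \<Longrightarrow> in_J n c a \<Longrightarrow> in_J n c (r * a)"
  by (simp add: in_J_def in_R_def Jideal_def grass_of_times gideal.lmul_in)

lemma in_J_mult_right: "in_R n r \<Longrightarrow> in_J n c a \<Longrightarrow> in_J n c (a * r)"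
  by (simp add: in_J_def in_R_def Jideal_def grass_of_times gideal.rmul_in)

lemma in_J_scalar_mult: "in_J n c a \<Longrightarrow> in_J n c (scalar t * a)"
  by (simp add: in_J_mult_left)

lemma in_J_uminus: "in_J n c a \<Longrightarrow> in_J n c (- a)"
  using in_J_scalar_mult[of n c a "- 1"] by (simp add: scalar_minus)

lemma in_J_diff: "in_J n c a \<Longrightarrow> in_J n c b \<Longrightarrow> in_J n c (a - b)"
  by (metis diff_conv_add_uminus in_J_add in_J_uminus)

lemma in_J_0 [simp]: "in_J n c 0"
  by (simp add: in_J_def Jideal_def zero_grassmann.rep_eq gideal.zero_in)

lemma in_J_sum: "(\<And>i. i \<in> I \<Longrightarrow> in_J n c (f i)) \<Longrightarrow> in_J n c (sum f I)"
  by (induction I rule: infinite_finite_induct) (simp_all add: in_J_add)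

lemma in_J_of_nat_mult_cancel:
  assumes "0 < d" "in_J n c (of_nat d * a)"
  shows "in_J n c a"
proof -
  have "in_J n c (scalar (1 / of_nat d) * (of_nat d * a))"
    using assms(2) by (rule in_J_scalar_mult)
  moreover have "scalar (1 / of_nat d) * (of_nat d * a) = a"
    using assms(1) by (simp only: scalar_of_nat[symmetric] scalar_mult_scalar_mult) simp
  ultimately show ?thesis by simp
qed

definition bracket ::
    "nat \<Rightarrow> (nat \<Rightarrow> nat \<Rightarrow> nat \<Rightarrow> complex) \<Rightarrow> (nat \<Rightarrow> grassmann) \<Rightarrow> (nat \<Rightarrow> grassmann) \<Rightarrow> nat \<Rightarrow> grassmann"
  where "bracket n c u v k = (\<Sum>a<n. \<Sum>b<n. scalar (c a b k) * (u a * v b))"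

lemma grass_of_bracket:
  "grass_of (bracket n c u v k) = gbracket n c (\<lambda>a. grass_of (u a)) (\<lambda>b. grass_of (v b)) k"
  unfolding bracket_def gbracket_def
  by (simp only: sum.cartesian_product grass_of_sum grass_of_scalar_mult split_def)
    (simp add: grass_of_times)

lemma in_J_bracket:
  "(\<And>a. a < n \<Longrightarrow> in_J n c (u a)) \<Longrightarrow> (\<And>b. b < n \<Longrightarrow> in_R n (v b)) \<Longrightarrow> in_J n c (bracket n c u v k)"
  unfolding bracket_def by (intro in_J_sum in_J_scalar_mult in_J_mult_right) auto

lemma in_J_bracket_xx: "k < n \<Longrightarrow> in_J n c (bracket n c xvar xvar k)"
  by (auto simp: in_J_def Jideal_def grass_of_bracket generator.rep_eq xgen_def[abs_def]
      intro!: gideal.gen_in)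

abbreviation pmonom :: "(nat \<Rightarrow>\<^sub>0 nat) \<Rightarrow> complex \<Rightarrow> cpoly" where
  "pmonom \<equiv> Poly_Mapping.single"

abbreviation unit_exp :: "nat \<Rightarrow> (nat \<Rightarrow>\<^sub>0 nat)" where
  "unit_exp i \<equiv> Poly_Mapping.single i (Suc 0)"

lemma cpoly_as_sum_monoms:
  "(P::cpoly) = (\<Sum>\<alpha>\<in>Poly_Mapping.keys P. pmonom \<alpha> (Poly_Mapping.lookup P \<alpha>))"
proof (rule poly_mapping_eqI)
  fix \<beta>
  have "Poly_Mapping.lookup (\<Sum>\<alpha>\<in>Poly_Mapping.keys P. pmonom \<alpha> (Poly_Mapping.lookup P \<alpha>)) \<beta>
      = (\<Sum>\<alpha>\<in>Poly_Mapping.keys P. if \<alpha> = \<beta> then Poly_Mapping.lookup P \<alpha> else 0)"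
    by (simp add: lookup_sum lookup_single when_def)
  also have "\<dots> = Poly_Mapping.lookup P \<beta>"
    by (simp add: sum.delta in_keys_iff)
  finally show "Poly_Mapping.lookup P \<beta>
      = Poly_Mapping.lookup (\<Sum>\<alpha>\<in>Poly_Mapping.keys P. pmonom \<alpha> (Poly_Mapping.lookup P \<alpha>)) \<beta>"
    by simp
qed

lemma pdiff_sum_superset:
  assumes "finite K" "Poly_Mapping.keys P \<subseteq> K"
  shows "pdiff i P
    = (\<Sum>\<alpha>\<in>K. pmonom (\<alpha> - unit_exp i) (of_nat (Poly_Mapping.lookup \<alpha> i) * Poly_Mapping.lookup P \<alpha>))"
  unfolding pdiff_def One_nat_def
  by (rule sum.mono_neutral_left) (use assms in \<open>auto simp: in_keys_iff\<close>)

lemma pdiff_add: "pdiff i (P + Q) = pdiff i P + pdiff i Q"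
proof -
  let ?K = "Poly_Mapping.keys P \<union> Poly_Mapping.keys Q"
  have "Poly_Mapping.keys (P + Q) \<subseteq> ?K" by (rule keys_add)
  then show ?thesis
    by (simp add: pdiff_sum_superset[of ?K] lookup_add distrib_left single_add sum.distrib)
qed

lemma pdiff_0 [simp]: "pdiff i 0 = 0"
  by (simp add: pdiff_def)

lemma pdiff_uminus: "pdiff i (- P) = - pdiff i P"
  unfolding eq_neg_iff_add_eq_0 pdiff_add[symmetric] by simp

lemma pdiff_sum: "pdiff i (sum f I) = (\<Sum>x\<in>I. pdiff i (f x))"
  by (induction I rule: infinite_finite_induct) (simp_all add: pdiff_add)

lemma pdiff_pmonom:
  "pdiff i (pmonom \<alpha> a) = pmonom (\<alpha> - unit_exp i) (of_nat (Poly_Mapping.lookup \<alpha> i) * a)"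
  by (subst pdiff_sum_superset[of "{\<alpha>}"]) auto

lemma lookup_minus_unit_exp:
  "Poly_Mapping.lookup (\<alpha> - unit_exp i) k = Poly_Mapping.lookup \<alpha> k - (if k = i then 1 else 0)"
  by (simp add: lookup_minus lookup_single when_def)

lemma minus_unit_exp_add:
  assumes "0 < Poly_Mapping.lookup \<alpha> i"
  shows "\<alpha> - unit_exp i + \<beta> = \<alpha> + \<beta> - unit_exp i"
  by (rule poly_mapping_eqI) (use assms in \<open>auto simp: lookup_add lookup_minus lookup_single when_def\<close>)

lemma pdiff_pmonom_mult:
  "pdiff i (pmonom \<alpha> a * pmonom \<beta> b) = pdiff i (pmonom \<alpha> a) * pmonom \<beta> b + pmonom \<alpha> a * pdiff i (pmonom \<beta> b)"
proof -
  have l: "pdiff i (pmonom \<alpha> a) * pmonom \<beta> b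
      = pmonom (\<alpha> + \<beta> - unit_exp i) (of_nat (Poly_Mapping.lookup \<alpha> i) * a * b)"
    by (cases "Poly_Mapping.lookup \<alpha> i = 0") (simp_all add: pdiff_pmonom mult_single minus_unit_exp_add)
  have r: "pmonom \<alpha> a * pdiff i (pmonom \<beta> b)
      = pmonom (\<alpha> + \<beta> - unit_exp i) (of_nat (Poly_Mapping.lookup \<beta> i) * a * b)"
    by (cases "Poly_Mapping.lookup \<beta> i = 0")
      (simp_all add: pdiff_pmonom mult_single add.commute[of \<alpha>] minus_unit_exp_add[of \<beta> i \<alpha>] mult_ac)
  show ?thesis
    unfolding l r
    by (simp only: mult_single pdiff_pmonom single_add[symmetric] lookup_add of_nat_add)
      (simp add: ring_distribs mult_ac)
qed

lemma pdiff_mult: "pdiff i (P * Q) = pdiff i P * Q + P * pdiff i Q"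
proof -
  let ?P = "\<lambda>\<alpha>. pmonom \<alpha> (Poly_Mapping.lookup P \<alpha>)" and ?Q = "\<lambda>\<beta>. pmonom \<beta> (Poly_Mapping.lookup Q \<beta>)"
  have "pdiff i ((\<Sum>\<alpha>\<in>Poly_Mapping.keys P. ?P \<alpha>) * (\<Sum>\<beta>\<in>Poly_Mapping.keys Q. ?Q \<beta>))
      = pdiff i (\<Sum>\<alpha>\<in>Poly_Mapping.keys P. ?P \<alpha>) * (\<Sum>\<beta>\<in>Poly_Mapping.keys Q. ?Q \<beta>)
        + (\<Sum>\<alpha>\<in>Poly_Mapping.keys P. ?P \<alpha>) * pdiff i (\<Sum>\<beta>\<in>Poly_Mapping.keys Q. ?Q \<beta>)"
    by (simp only: sum_product pdiff_sum pdiff_pmonom_mult sum.distrib)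
  then show ?thesis by (simp flip: cpoly_as_sum_monoms)
qed

lemma pvar_pmonom: "pvar k = pmonom (unit_exp k) 1"
  by (simp add: pvar_def)

lemma pconst_pmonom: "pconst t = pmonom 0 t"
  by (simp add: pconst_def)

lemma pdiff_pvar: "pdiff i (pvar k) = (if i = k then 1 else 0)"
  by (simp add: pvar_pmonom pdiff_pmonom lookup_single when_def)

lemma pdiff_pconst [simp]: "pdiff i (pconst t) = 0"
  by (simp add: pconst_pmonom pdiff_pmonom)

lemma pdiff_pconst_mult: "pdiff i (pconst t * P) = pconst t * pdiff i P"
  by (simp add: pdiff_mult)

lemma pdiff_of_nat_mult: "pdiff i (of_nat k * P) = of_nat k * pdiff i P"
  using pdiff_pconst_mult[of i "of_nat k" P] by (simp add: pconst_pmonom flip: single_of_nat)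

lemma pdiff_commute: "pdiff i (pdiff j P) = pdiff j (pdiff i P)"
proof -
  have monom: "pdiff i (pdiff j (pmonom \<alpha> a)) = pdiff j (pdiff i (pmonom \<alpha> a))" for \<alpha> a
  proof (cases "i = j")
    case False
    have "\<alpha> - unit_exp j - unit_exp i = \<alpha> - unit_exp i - unit_exp j"
      by (rule poly_mapping_eqI) (simp add: lookup_minus_unit_exp)
    with False show ?thesis by (simp add: pdiff_pmonom lookup_minus_unit_exp mult_ac)
  qed simp
  show ?thesis
    by (subst (1 2) cpoly_as_sum_monoms) (simp add: pdiff_sum monom)
qed

lemma single_sum: "Poly_Mapping.single k (sum f A) = (\<Sum>i\<in>A. Poly_Mapping.single k (f i))"
  by (induction A rule: infinite_finite_induct) (simp_all add: single_add)

lemma pvar_mult_pdiff_pmonom: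
  "pvar m * pdiff m (pmonom \<alpha> a) = pmonom \<alpha> (of_nat (Poly_Mapping.lookup \<alpha> m) * a)"
proof (cases "Poly_Mapping.lookup \<alpha> m = 0")
  case False
  have "unit_exp m + (\<alpha> - unit_exp m) = \<alpha>"
    by (rule poly_mapping_eqI) (use False in \<open>auto simp: lookup_add lookup_minus lookup_single when_def\<close>)
  then show ?thesis by (simp add: pvar_pmonom pdiff_pmonom mult_single)
qed (simp add: pdiff_pmonom)

lemma euler_identity:
  assumes "poly_in_vars n P" "homogeneous d P"
  shows "(\<Sum>m<n. pvar m * pdiff m P) = of_nat d * P"
proof -
  have "(\<Sum>m<n. pvar m * pdiff m P)
      = (\<Sum>\<alpha>\<in>Poly_Mapping.keys P. \<Sum>m<n. pmonom \<alpha> (of_nat (Poly_Mapping.lookup \<alpha> m) * Poly_Mapping.lookup P \<alpha>))"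
    by (subst cpoly_as_sum_monoms)
      (simp add: pdiff_sum sum_distrib_left pvar_mult_pdiff_pmonom sum.swap[of _ "{..<n}"])
  also have "\<dots> = (\<Sum>\<alpha>\<in>Poly_Mapping.keys P. pmonom \<alpha> (of_nat d * Poly_Mapping.lookup P \<alpha>))"
  proof (rule sum.cong[OF refl])
    fix \<alpha> assume \<alpha>: "\<alpha> \<in> Poly_Mapping.keys P"
    have "(\<Sum>m<n. Poly_Mapping.lookup \<alpha> m) = (\<Sum>m\<in>Poly_Mapping.keys \<alpha>. Poly_Mapping.lookup \<alpha> m)"
      by (rule sum.mono_neutral_right) (use \<alpha> assms(1) in \<open>auto simp: poly_in_vars_def in_keys_iff\<close>)
    also have "\<dots> = d" using \<alpha> assms(2) by (simp add: homogeneous_def)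
    finally show "(\<Sum>m<n. pmonom \<alpha> (of_nat (Poly_Mapping.lookup \<alpha> m) * Poly_Mapping.lookup P \<alpha>))
        = pmonom \<alpha> (of_nat d * Poly_Mapping.lookup P \<alpha>)"
      by (simp flip: single_sum sum_distrib_right of_nat_sum)
  qed
  also have "\<dots> = of_nat d * P"
    by (subst (2) cpoly_as_sum_monoms) (simp add: sum_distrib_left mult_single flip: single_of_nat)
  finally show ?thesis .
qed

lemma euler_identity_pdiff:
  assumes "poly_in_vars n P" "homogeneous d P" "b < n"
  shows "(\<Sum>m<n. pvar m * pdiff m (pdiff b P)) = (of_nat d - 1) * pdiff b P"
proof -
  have "pdiff b (\<Sum>m<n. pvar m * pdiff m P) = (\<Sum>m<n. pvar m * pdiff m (pdiff b P)) + pdiff b P"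
    using assms(3)
    by (simp add: pdiff_sum pdiff_mult pdiff_pvar sum.distrib pdiff_commute[of b] add.commute
        if_distrib[of "\<lambda>x. x * _"] sum.delta cong: if_cong)
  moreover have "pdiff b (\<Sum>m<n. pvar m * pdiff m P) = of_nat d * pdiff b P"
    by (simp add: euler_identity[OF assms(1,2)] pdiff_of_nat_mult)
  ultimately show ?thesis by (simp add: algebra_simps)
qed

definition lie_action :: "nat \<Rightarrow> (nat \<Rightarrow> nat \<Rightarrow> nat \<Rightarrow> complex) \<Rightarrow> nat \<Rightarrow> cpoly \<Rightarrow> cpoly" where
  "lie_action n c a P = (\<Sum>b<n. \<Sum>k<n. pconst (c a k b) * pvar k * pdiff b P)"

lemma lie_action_invariant: "invariant_poly n c P \<Longrightarrow> a < n \<Longrightarrow> lie_action n c a P = 0"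
  by (simp add: invariant_poly_def lie_action_def)

lemma pdiff_lie_action:
  assumes "m < n"
  shows "pdiff m (lie_action n c a P) = (\<Sum>b<n. pconst (c a m b) * pdiff b P) + lie_action n c a (pdiff m P)"
proof -
  have "pdiff m (lie_action n c a P) = (\<Sum>b<n. \<Sum>k<n. (if m = k then pconst (c a k b) * pdiff b P else 0)
           + pconst (c a k b) * pvar k * pdiff b (pdiff m P))"
    unfolding lie_action_def pdiff_sum
    by (intro sum.cong refl) (simp add: pdiff_mult pdiff_pvar pdiff_commute[of m] algebra_simps)
  also have "\<dots> = (\<Sum>b<n. pconst (c a m b) * pdiff b P) + lie_action n c a (pdiff m P)"
    unfolding lie_action_def sum.distrib by (simp add: mult.assoc sum.delta assms)
  finally show ?thesis .
qed

definition commute :: "'a::semigroup_mult \<Rightarrow> 'a \<Rightarrow> bool" where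
  "commute x y \<longleftrightarrow> x * y = y * x"

lemma commute_sym: "commute x y \<Longrightarrow> commute y x"
  by (simp add: commute_def)

lemma commute_1 [simp]: "commute x (1::'a::monoid_mult)"
  by (simp add: commute_def)

lemma commute_mult: "commute x y \<Longrightarrow> commute x z \<Longrightarrow> commute x (y * z)"
  by (simp add: commute_def) (metis mult.assoc)

lemma commute_power: "commute x (y::'a::monoid_mult) \<Longrightarrow> commute x (y ^ k)"
  by (induction k) (auto intro: commute_mult)

lemma commute_sum:
  "(\<And>i. i \<in> I \<Longrightarrow> commute x (f i)) \<Longrightarrow> commute x (sum f I :: 'a::semiring_0)"
  by (simp add: commute_def sum_distrib_left sum_distrib_right)

lemma commute_scalar [simp]: "commute x (scalar t)"
  by (simp add: commute_def scalar_mult_commute)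

definition eval_monom :: "nat \<Rightarrow> (nat \<Rightarrow> grassmann) \<Rightarrow> (nat \<Rightarrow>\<^sub>0 nat) \<Rightarrow> grassmann" where
  "eval_monom n w \<alpha> = fold (\<lambda>i acc. acc * w i ^ Poly_Mapping.lookup \<alpha> i) [0..<n] 1"

definition eval_poly :: "nat \<Rightarrow> (nat \<Rightarrow> grassmann) \<Rightarrow> cpoly \<Rightarrow> grassmann" where
  "eval_poly n w P = (\<Sum>\<alpha>\<in>Poly_Mapping.keys P. scalar (Poly_Mapping.lookup P \<alpha>) * eval_monom n w \<alpha>)"

lemma grass_of_eval_poly: "grass_of (eval_poly n w P) = geval n P (\<lambda>k. grass_of (w k))"
proof -
  have "fold (\<lambda>i acc. gmul acc (gpow (grass_of (w i)) (Poly_Mapping.lookup \<alpha> i))) is (grass_of a)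
      = grass_of (fold (\<lambda>i acc. acc * w i ^ Poly_Mapping.lookup \<alpha> i) is a)" for \<alpha> "is" a
    by (induction "is" arbitrary: a) (simp_all flip: grass_of_times grass_of_power)
  from this[of _ _ 1] show ?thesis
    unfolding geval_def eval_poly_def eval_monom_def
    by (simp add: grass_of_sum grass_of_scalar_mult one_grassmann.rep_eq)
qed

lemma eval_monom_Suc: "eval_monom (Suc m) w \<alpha> = eval_monom m w \<alpha> * w m ^ Poly_Mapping.lookup \<alpha> m"
  by (simp add: eval_monom_def)

lemma eval_monom_0 [simp]: "eval_monom 0 w \<alpha> = 1"
  by (simp add: eval_monom_def)

lemma eval_monom_zero_exp [simp]: "eval_monom m w 0 = 1"
  by (induction m) (simp_all add: eval_monom_Suc)

lemma eval_monom_unit_exp: "eval_monom m w (unit_exp k) = (if k < m then w k else 1)"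
  by (induction m) (auto simp: eval_monom_Suc lookup_single when_def less_Suc_eq)

lemma commute_eval_monom: "(\<And>i. commute x (w i)) \<Longrightarrow> commute x (eval_monom m w \<alpha>)"
  by (induction m) (auto simp: eval_monom_Suc intro!: commute_mult commute_power)

lemma commute_eval_poly: "(\<And>i. commute x (w i)) \<Longrightarrow> commute x (eval_poly n w P)"
  unfolding eval_poly_def by (auto intro!: commute_sum commute_mult commute_eval_monom)

lemma in_R_eval_poly: "(\<And>i. in_R N (w i)) \<Longrightarrow> in_R N (eval_poly n w P)"
proof -
  assume w: "\<And>i. in_R N (w i)"
  have "in_R N (eval_monom m w \<alpha>)" for m \<alpha>
    by (induction m) (auto simp: eval_monom_Suc w intro!: in_R_mult in_R_power)
  then show ?thesis unfolding eval_poly_def by (auto intro!: in_R_sum in_R_mult)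
qed

lemma eval_monom_add:
  assumes "\<And>i j. commute (w i) (w j)"
  shows "eval_monom m w (\<alpha> + \<beta>) = eval_monom m w \<alpha> * eval_monom m w \<beta>"
proof (induction m)
  case (Suc m)
  let ?a = "w m ^ Poly_Mapping.lookup \<alpha> m" and ?b = "w m ^ Poly_Mapping.lookup \<beta> m"
  have "commute ?a (eval_monom m w \<beta>)"
    using assms by (intro commute_sym[OF commute_power] commute_sym[OF commute_eval_monom])
  then have "eval_monom m w \<alpha> * eval_monom m w \<beta> * (?a * ?b)
      = eval_monom m w \<alpha> * ?a * (eval_monom m w \<beta> * ?b)"
    by (simp add: commute_def mult.assoc) (metis mult.assoc)
  then show ?case by (simp add: eval_monom_Suc Suc lookup_add power_add)
qed simp

lemma eval_poly_superset:
  assumes "finite K" "Poly_Mapping.keys P \<subseteq> K"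
  shows "eval_poly n w P = (\<Sum>\<alpha>\<in>K. scalar (Poly_Mapping.lookup P \<alpha>) * eval_monom n w \<alpha>)"
  unfolding eval_poly_def
  by (rule sum.mono_neutral_left) (use assms in \<open>auto simp: in_keys_iff\<close>)

lemma eval_poly_add: "eval_poly n w (P + Q) = eval_poly n w P + eval_poly n w Q"
proof -
  let ?K = "Poly_Mapping.keys P \<union> Poly_Mapping.keys Q"
  have "Poly_Mapping.keys (P + Q) \<subseteq> ?K" by (rule keys_add)
  then show ?thesis
    by (simp add: eval_poly_superset[of ?K] lookup_add scalar_add distrib_right sum.distrib)
qed

lemma eval_poly_0 [simp]: "eval_poly n w 0 = 0"
  by (simp add: eval_poly_def)

lemma eval_poly_sum: "eval_poly n w (sum f I) = (\<Sum>i\<in>I. eval_poly n w (f i))"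
  by (induction I rule: infinite_finite_induct) (simp_all add: eval_poly_add)

lemma eval_poly_pmonom: "eval_poly n w (pmonom \<alpha> a) = scalar a * eval_monom n w \<alpha>"
  by (subst eval_poly_superset[of "{\<alpha>}"]) auto

lemma eval_poly_mult:
  assumes "\<And>i j. commute (w i) (w j)"
  shows "eval_poly n w (P * Q) = eval_poly n w P * eval_poly n w Q"
proof -
  have monom: "eval_poly n w (pmonom \<alpha> a * pmonom \<beta> b) = eval_poly n w (pmonom \<alpha> a) * eval_poly n w (pmonom \<beta> b)"
    for \<alpha> \<beta> a b
    by (simp add: mult_single eval_poly_pmonom eval_monom_add[OF assms] scalar_mult_mult_scalar_mult)
  let ?P = "\<lambda>\<alpha>. pmonom \<alpha> (Poly_Mapping.lookup P \<alpha>)" and ?Q = "\<lambda>\<beta>. pmonom \<beta> (Poly_Mapping.lookup Q \<beta>)"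
  have "eval_poly n w ((\<Sum>\<alpha>\<in>Poly_Mapping.keys P. ?P \<alpha>) * (\<Sum>\<beta>\<in>Poly_Mapping.keys Q. ?Q \<beta>))
      = eval_poly n w (\<Sum>\<alpha>\<in>Poly_Mapping.keys P. ?P \<alpha>) * eval_poly n w (\<Sum>\<beta>\<in>Poly_Mapping.keys Q. ?Q \<beta>)"
    by (simp only: sum_product eval_poly_sum monom)
  then show ?thesis by (simp flip: cpoly_as_sum_monoms)
qed

lemma eval_poly_pconst: "eval_poly n w (pconst t) = scalar t"
  by (simp add: pconst_pmonom eval_poly_pmonom)

lemma eval_poly_pvar: "k < n \<Longrightarrow> eval_poly n w (pvar k) = w k"
  by (simp add: pvar_pmonom eval_poly_pmonom eval_monom_unit_exp)

lemma eval_poly_of_nat: "eval_poly n w (of_nat d) = of_nat d"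
  by (simp add: eval_poly_pmonom scalar_of_nat flip: single_of_nat)

definition xy_bracket :: "nat \<Rightarrow> (nat \<Rightarrow> nat \<Rightarrow> nat \<Rightarrow> complex) \<Rightarrow> nat \<Rightarrow> grassmann" where
  "xy_bracket n c = bracket n c xvar (yvar n)"

definition eval_xy :: "nat \<Rightarrow> (nat \<Rightarrow> nat \<Rightarrow> nat \<Rightarrow> complex) \<Rightarrow> cpoly \<Rightarrow> grassmann" where
  "eval_xy n c = eval_poly n (xy_bracket n c)"

definition Fhat_grassmann :: "nat \<Rightarrow> (nat \<Rightarrow> nat \<Rightarrow> nat \<Rightarrow> complex) \<Rightarrow> cpoly \<Rightarrow> grassmann" where
  "Fhat_grassmann n c P = (\<Sum>a<n. \<Sum>b<n. eval_xy n c (pdiff a (pdiff b P)) * xvar a * yvar n b)"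

lemma Fhat_eq_grass_of: "Fhat n c P = grass_of (Fhat_grassmann n c P)"
proof -
  have "gbracket n c (xgen n) (ygen n) = (\<lambda>k. grass_of (xy_bracket n c k))"
    by (simp add: xy_bracket_def grass_of_bracket generator.rep_eq xgen_def[abs_def] ygen_def[abs_def])
  then show ?thesis
    unfolding Fhat_def Fhat_grassmann_def eval_xy_def
    by (simp add: sum.cartesian_product grass_of_sum split_def grass_of_times grass_of_eval_poly
        generator.rep_eq xgen_def ygen_def)
qed

lemma commute_generator_generator_mult: "commute (generator i) (generator p * generator q)"
  unfolding commute_def
  by (metis generator_anticommute minus_mult_minus mult.assoc)

lemma commute_bracket: "(\<And>a b. commute x (u a * v b)) \<Longrightarrow> commute x (bracket n c u v k)"
  unfolding bracket_def by (intro commute_sum commute_mult[OF commute_scalar])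

lemma commute_generator_xy_bracket: "commute (generator i) (xy_bracket n c k)"
  unfolding xy_bracket_def by (intro commute_bracket commute_generator_generator_mult)

lemma generator_xy_bracket_left_commute:
  "generator i * (xy_bracket n c k * a) = xy_bracket n c k * (generator i * a)"
  using commute_generator_xy_bracket[of i n c k] by (simp add: commute_def flip: mult.assoc)

lemma commute_xy_bracket: "commute (xy_bracket n c j) (xy_bracket n c k)"
  unfolding xy_bracket_def[of n c]
  by (intro commute_bracket commute_sym[OF commute_bracket] commute_mult
      commute_sym[OF commute_generator_generator_mult])

lemma eval_xy_generator_commute: "eval_xy n c P * generator i = generator i * eval_xy n c P"
  using commute_eval_poly[of "generator i" "xy_bracket n c"] commute_generator_xy_bracket
  by (simp add: eval_xy_def commute_def)

lemma in_R_eval_xy: "in_R n (eval_xy n c P)"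
  unfolding eval_xy_def xy_bracket_def bracket_def
  by (intro in_R_eval_poly in_R_sum in_R_mult in_R_scalar in_R_generator) auto

lemma in_R_Fhat_grassmann: "in_R n (Fhat_grassmann n c P)"
  unfolding Fhat_grassmann_def
  by (auto intro!: in_R_sum in_R_mult in_R_eval_xy in_R_generator)

lemma eval_xy_0 [simp]: "eval_xy n c 0 = 0"
  by (simp add: eval_xy_def)

lemma eval_xy_add: "eval_xy n c (P + Q) = eval_xy n c P + eval_xy n c Q"
  by (simp add: eval_xy_def eval_poly_add)

lemma eval_xy_diff: "eval_xy n c (P - Q) = eval_xy n c P - eval_xy n c Q"
  using eval_xy_add[of n c "P - Q" Q] by (simp add: eq_diff_eq)

lemma eval_xy_uminus: "eval_xy n c (- P) = - eval_xy n c P"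
  unfolding eq_neg_iff_add_eq_0 eval_xy_add[symmetric] by simp

lemma eval_xy_sum: "eval_xy n c (sum f I) = (\<Sum>i\<in>I. eval_xy n c (f i))"
  by (simp add: eval_xy_def eval_poly_sum)

lemma eval_xy_mult: "eval_xy n c (P * Q) = eval_xy n c P * eval_xy n c Q"
  by (simp add: eval_xy_def eval_poly_mult commute_xy_bracket)

lemma eval_xy_left_commute: "eval_xy n c P * (eval_xy n c Q * a) = eval_xy n c Q * (eval_xy n c P * a)"
  by (simp only: mult.assoc[symmetric] eval_xy_mult[symmetric] mult.commute[of P Q])

lemma eval_xy_pconst: "eval_xy n c (pconst t) = scalar t"
  by (simp add: eval_xy_def eval_poly_pconst)

lemma eval_xy_pvar: "k < n \<Longrightarrow> eval_xy n c (pvar k) = xy_bracket n c k"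
  by (simp add: eval_xy_def eval_poly_pvar)

lemma eval_xy_of_nat: "eval_xy n c (of_nat d) = of_nat d"
  by (simp add: eval_xy_def eval_poly_of_nat)

lemma eval_xy_lie_action:
  "eval_xy n c (lie_action n c a P)
    = (\<Sum>b<n. \<Sum>k<n. scalar (c a k b) * (xy_bracket n c k * eval_xy n c (pdiff b P)))"
  unfolding lie_action_def eval_xy_sum eval_xy_mult eval_xy_pconst
  by (intro sum.cong refl) (simp add: eval_xy_pvar mult.assoc)

lemma eval_xy_euler_identity:
  assumes "poly_in_vars n P" "homogeneous d P"
  shows "(\<Sum>m<n. xy_bracket n c m * eval_xy n c (pdiff m P)) = of_nat d * eval_xy n c P"
  using arg_cong[OF euler_identity[OF assms], of "eval_xy n c"]
  by (simp add: eval_xy_sum eval_xy_mult eval_xy_pvar eval_xy_of_nat)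

lemma eval_xy_euler_identity_pdiff:
  assumes "poly_in_vars n P" "homogeneous d P" "b < n"
  shows "(\<Sum>m<n. xy_bracket n c m * eval_xy n c (pdiff m (pdiff b P)))
    = (of_nat d - 1) * eval_xy n c (pdiff b P)"
  using arg_cong[OF euler_identity_pdiff[OF assms], of "eval_xy n c"]
  by (simp add: eval_xy_sum eval_xy_mult eval_xy_pvar eval_xy_of_nat eval_xy_diff left_diff_distrib)

lemma Fhat_grassmann_mult:
  "Fhat_grassmann n c (F * H)
    = eval_xy n c H * Fhat_grassmann n c F + eval_xy n c F * Fhat_grassmann n c H
      + (\<Sum>b<n. eval_xy n c (pdiff b F) * (\<Sum>a<n. eval_xy n c (pdiff a H) * xvar a) * yvar n b)
      + (\<Sum>b<n. eval_xy n c (pdiff b H) * (\<Sum>a<n. eval_xy n c (pdiff a F) * xvar a) * yvar n b)"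
proof -
  let ?\<Phi> = "eval_xy n c"
  have "pdiff a (pdiff b (F * H)) = pdiff a (pdiff b F) * H + F * pdiff a (pdiff b H)
      + pdiff b F * pdiff a H + pdiff a F * pdiff b H" for a b
    by (simp add: pdiff_mult pdiff_add algebra_simps)
  then have "Fhat_grassmann n c (F * H)
      = (\<Sum>a<n. \<Sum>b<n. ?\<Phi> (pdiff a (pdiff b F)) * ?\<Phi> H * xvar a * yvar n b)
      + (\<Sum>a<n. \<Sum>b<n. ?\<Phi> F * ?\<Phi> (pdiff a (pdiff b H)) * xvar a * yvar n b)
      + (\<Sum>a<n. \<Sum>b<n. ?\<Phi> (pdiff b F) * ?\<Phi> (pdiff a H) * xvar a * yvar n b)
      + (\<Sum>a<n. \<Sum>b<n. ?\<Phi> (pdiff a F) * ?\<Phi> (pdiff b H) * xvar a * yvar n b)"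
    by (simp only: Fhat_grassmann_def eval_xy_add eval_xy_mult distrib_right sum.distrib)
  also have "(\<Sum>a<n. \<Sum>b<n. ?\<Phi> (pdiff a (pdiff b F)) * ?\<Phi> H * xvar a * yvar n b)
      = ?\<Phi> H * Fhat_grassmann n c F"
    by (simp only: Fhat_grassmann_def sum_distrib_left mult.assoc eval_xy_left_commute[of n c _ H])
  also have "(\<Sum>a<n. \<Sum>b<n. ?\<Phi> F * ?\<Phi> (pdiff a (pdiff b H)) * xvar a * yvar n b)
      = ?\<Phi> F * Fhat_grassmann n c H"
    by (simp only: Fhat_grassmann_def sum_distrib_left mult.assoc)
  also have "(\<Sum>a<n. \<Sum>b<n. ?\<Phi> (pdiff b F) * ?\<Phi> (pdiff a H) * xvar a * yvar n b)
      = (\<Sum>b<n. ?\<Phi> (pdiff b F) * (\<Sum>a<n. ?\<Phi> (pdiff a H) * xvar a) * yvar n b)"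
    by (subst sum.swap) (simp only: sum_distrib_left sum_distrib_right mult.assoc)
  also have "(\<Sum>a<n. \<Sum>b<n. ?\<Phi> (pdiff a F) * ?\<Phi> (pdiff b H) * xvar a * yvar n b)
      = (\<Sum>b<n. ?\<Phi> (pdiff b H) * (\<Sum>a<n. ?\<Phi> (pdiff a F) * xvar a) * yvar n b)"
    by (subst sum.swap)
      (simp only: sum_distrib_left sum_distrib_right mult.assoc
        eval_xy_left_commute[of n c "pdiff a F" "pdiff b H" for a b])
  finally show ?thesis .
qed

section \<open>The Jacobi identity for odd elements\<close>

lemma lie_antisym:
  assumes "simple_quadratic_lie n c" "a < n" "b < n" "k < n"
  shows "c a b k = - c b a k"
  using conjunct1[OF assms(1)[unfolded simple_quadratic_lie_def]] assms(2-4) by blast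

lemma lie_jacobi:
  assumes "simple_quadratic_lie n c" "a < n" "b < n" "d < n" "m < n"
  shows "(\<Sum>k<n. c a b k * c k d m + c b d k * c k a m + c d a k * c k b m) = 0"
  using conjunct1[OF conjunct2[OF assms(1)[unfolded simple_quadratic_lie_def]]] assms(2-5) by blast

lemma lie_form_invariant:
  assumes "simple_quadratic_lie n c" "a < n" "b < n" "k < n"
  shows "c a b k = - c a k b"
  using conjunct1[OF conjunct2[OF conjunct2[OF assms(1)[unfolded simple_quadratic_lie_def]]]] assms(2-4)
  by blast

lemma lie_nonabelian:
  assumes "simple_quadratic_lie n c"
  obtains a b k where "a < n" "b < n" "k < n" "c a b k \<noteq> 0"
  using conjunct1[OF conjunct2[OF conjunct2[OF conjunct2[OF assms[unfolded simple_quadratic_lie_def]]]]]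
  by blast

lemma lie_ideal_trivial:
  assumes "simple_quadratic_lie n c" "lie_ideal n c V"
  shows "V = {\<lambda>_. 0} \<or> V = lie_vecs n"
  using conjunct2[OF conjunct2[OF conjunct2[OF conjunct2[OF assms(1)[unfolded simple_quadratic_lie_def]]]]]
    assms(2)
  by blast

lemma sum_rotate3: "(\<Sum>k\<in>A. \<Sum>r\<in>B. \<Sum>s\<in>C. f k r s) = (\<Sum>r\<in>B. \<Sum>s\<in>C. \<Sum>k\<in>A. f k r s)"
proof -
  have "(\<Sum>k\<in>A. \<Sum>r\<in>B. \<Sum>s\<in>C. f k r s) = (\<Sum>r\<in>B. \<Sum>k\<in>A. \<Sum>s\<in>C. f k r s)"
    by (rule sum.swap)
  also have "\<dots> = (\<Sum>r\<in>B. \<Sum>s\<in>C. \<Sum>k\<in>A. f k r s)"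
    by (rule sum.cong[OF refl], rule sum.swap)
  finally show ?thesis .
qed

lemma sum_rotate4:
  "(\<Sum>b\<in>A. \<Sum>p\<in>B. \<Sum>q\<in>C. \<Sum>j\<in>D. f b p q j) = (\<Sum>q\<in>C. \<Sum>j\<in>D. \<Sum>p\<in>B. \<Sum>b\<in>A. f b p q j)"
proof -
  have "(\<Sum>b\<in>A. \<Sum>p\<in>B. \<Sum>q\<in>C. \<Sum>j\<in>D. f b p q j) = (\<Sum>p\<in>B. \<Sum>b\<in>A. \<Sum>q\<in>C. \<Sum>j\<in>D. f b p q j)"
    by (rule sum.swap)
  also have "\<dots> = (\<Sum>p\<in>B. \<Sum>q\<in>C. \<Sum>j\<in>D. \<Sum>b\<in>A. f b p q j)"
    by (rule sum.cong[OF refl], rule sum_rotate3)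
  also have "\<dots> = (\<Sum>q\<in>C. \<Sum>j\<in>D. \<Sum>p\<in>B. \<Sum>b\<in>A. f b p q j)"
    by (rule sum_rotate3)
  finally show ?thesis .
qed

definition trilinear ::
    "nat \<Rightarrow> (nat \<Rightarrow> nat \<Rightarrow> nat \<Rightarrow> complex) \<Rightarrow> (nat \<Rightarrow> grassmann) \<Rightarrow> (nat \<Rightarrow> grassmann) \<Rightarrow> grassmann"
  where "trilinear n T x y = (\<Sum>p<n. \<Sum>r<n. \<Sum>s<n. scalar (T p r s) * (x p * (x r * y s)))"

lemma trilinear_cong:
  "(\<And>p r s. p < n \<Longrightarrow> r < n \<Longrightarrow> s < n \<Longrightarrow> T p r s = T' p r s) \<Longrightarrow> trilinear n T x y = trilinear n T' x y"
  unfolding trilinear_def by (intro sum.cong refl) auto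

lemma trilinear_diff:
  "trilinear n T x y - trilinear n T' x y = trilinear n (\<lambda>p r s. T p r s - T' p r s) x y"
  by (simp add: trilinear_def scalar_diff left_diff_distrib sum_subtractf)

lemma trilinear_swap:
  assumes "\<And>p r. x p * x r = - (x r * x p)"
  shows "trilinear n (\<lambda>p r s. T r p s) x y = - trilinear n T x y"
proof -
  have swap: "x p * (x r * z) = - (x r * (x p * z))" for p r z
    using assms[of p r] by (simp add: mult.assoc[symmetric])
  have "trilinear n (\<lambda>p r s. T r p s) x y = (\<Sum>r<n. \<Sum>p<n. \<Sum>s<n. scalar (T r p s) * (x p * (x r * y s)))"
    unfolding trilinear_def by (rule sum.swap)
  also have "\<dots> = (\<Sum>r<n. \<Sum>p<n. \<Sum>s<n. - (scalar (T r p s) * (x r * (x p * y s))))"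
    by (subst swap) simp
  also have "\<dots> = - trilinear n T x y"
    by (simp add: trilinear_def sum_negf)
  finally show ?thesis .
qed

lemma bracket_bracket_right:
  "bracket n c x (bracket n c x y) j = trilinear n (\<lambda>p r s. \<Sum>k<n. c p k j * c r s k) x y"
proof -
  have "bracket n c x (bracket n c x y) j
      = (\<Sum>p<n. \<Sum>k<n. \<Sum>r<n. \<Sum>s<n. scalar (c p k j * c r s k) * (x p * (x r * y s)))"
    unfolding bracket_def
    by (simp only: sum_distrib_left mult_scalar_left_commute[of "x p" for p] scalar_mult_scalar_mult)
  also have "\<dots> = (\<Sum>p<n. \<Sum>r<n. \<Sum>s<n. \<Sum>k<n. scalar (c p k j * c r s k) * (x p * (x r * y s)))"
    by (rule sum.cong[OF refl], rule sum_rotate3)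
  finally show ?thesis
    by (simp add: trilinear_def scalar_sum sum_distrib_right)
qed

lemma bracket_bracket_left:
  "bracket n c (bracket n c x x) y j = trilinear n (\<lambda>p r s. \<Sum>k<n. c p r k * c k s j) x y"
proof -
  let ?f = "\<lambda>k s p r. scalar (c k s j * c p r k) * (x p * (x r * y s))"
  have "bracket n c (bracket n c x x) y j = (\<Sum>k<n. \<Sum>s<n. \<Sum>p<n. \<Sum>r<n. ?f k s p r)"
    unfolding bracket_def
    by (simp only: sum_distrib_left sum_distrib_right mult.assoc scalar_mult_scalar_mult)
  also have "\<dots> = (\<Sum>s<n. \<Sum>p<n. \<Sum>k<n. \<Sum>r<n. ?f k s p r)"
    by (rule sum_rotate3)
  also have "\<dots> = (\<Sum>s<n. \<Sum>p<n. \<Sum>r<n. \<Sum>k<n. ?f k s p r)"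
    by (rule sum.cong[OF refl], rule sum.cong[OF refl], rule sum.swap)
  also have "\<dots> = (\<Sum>p<n. \<Sum>r<n. \<Sum>s<n. \<Sum>k<n. ?f k s p r)"
    by (rule sum_rotate3)
  finally show ?thesis
    by (simp add: trilinear_def scalar_sum sum_distrib_right mult.commute)
qed

lemma two_bracket_bracket_anticommuting:
  assumes lie: "simple_quadratic_lie n c" and "j < n"
    and anti: "\<And>p r. x p * x r = - (x r * x p)"
  shows "2 * bracket n c x (bracket n c x y) j = bracket n c (bracket n c x x) y j"
proof -
  let ?M = "\<lambda>p r s. \<Sum>k<n. c p k j * c r s k"
  have jacobi: "(\<Sum>k<n. c p r k * c k s j) = ?M p r s - ?M r p s"
    if "p < n" "r < n" "s < n" for p r s
  proof -
    have "(\<Sum>k<n. c r s k * c k p j) = - ?M p r s"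
      unfolding sum_negf[symmetric]
      by (rule sum.cong[OF refl]) (simp add: lie_antisym[OF lie _ that(1) \<open>j < n\<close>])
    moreover have "(\<Sum>k<n. c s p k * c k r j) = ?M r p s"
      by (rule sum.cong[OF refl])
        (simp add: lie_antisym[OF lie that(3,1)] lie_antisym[OF lie _ that(2) \<open>j < n\<close>])
    moreover have "(\<Sum>k<n. c p r k * c k s j) + (\<Sum>k<n. c r s k * c k p j) + (\<Sum>k<n. c s p k * c k r j) = 0"
      using lie_jacobi[OF lie that \<open>j < n\<close>] by (simp add: sum.distrib)
    ultimately show ?thesis by (simp add: algebra_simps)
  qed
  have "trilinear n (\<lambda>p r s. ?M r p s) x y = - trilinear n ?M x y"
    by (rule trilinear_swap[OF anti])
  then have "2 * trilinear n ?M x y = trilinear n ?M x y - trilinear n (\<lambda>p r s. ?M r p s) x y"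
    by (simp add: mult_2)
  also have "\<dots> = trilinear n (\<lambda>p r s. \<Sum>k<n. c p r k * c k s j) x y"
    unfolding trilinear_diff by (rule trilinear_cong) (simp add: jacobi)
  finally show ?thesis
    by (simp add: bracket_bracket_right bracket_bracket_left)
qed

lemma in_J_bracket_x_xy:
  assumes "simple_quadratic_lie n c" "j < n"
  shows "in_J n c (bracket n c xvar (xy_bracket n c) j)"
proof -
  have "bracket n c xvar (xy_bracket n c) j
      = scalar (1 / 2) * (of_nat 2 * bracket n c xvar (bracket n c xvar (yvar n)) j)"
    by (simp only: xy_bracket_def scalar_of_nat[symmetric] scalar_mult_scalar_mult) simp
  also have "\<dots> = scalar (1 / 2) * bracket n c (bracket n c xvar xvar) (yvar n) j"
    using two_bracket_bracket_anticommuting[OF assms generator_anticommute] by simp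
  finally show ?thesis
    by (simp add: in_J_scalar_mult in_J_bracket in_J_bracket_xx in_R_generator)
qed

section \<open>Linear invariants\<close>

lemma keys_homogeneous_1:
  assumes "homogeneous 1 P" "\<alpha> \<in> Poly_Mapping.keys P" "Poly_Mapping.lookup \<alpha> b \<noteq> 0"
  shows "\<alpha> = unit_exp b"
proof (rule poly_mapping_eqI)
  fix k
  have le: "(\<Sum>i\<in>I. Poly_Mapping.lookup \<alpha> i) \<le> 1" if "I \<subseteq> Poly_Mapping.keys \<alpha>" for I
    using sum_mono2[OF finite_keys that, of "Poly_Mapping.lookup \<alpha>"] assms(1,2)
    by (simp add: homogeneous_def)
  have b: "b \<in> Poly_Mapping.keys \<alpha>" using assms(3) by (simp add: in_keys_iff)
  then have b1: "Poly_Mapping.lookup \<alpha> b = 1" using le[of "{b}"] assms(3) by simp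
  show "Poly_Mapping.lookup \<alpha> k = Poly_Mapping.lookup (unit_exp b) k"
  proof (cases "k \<in> Poly_Mapping.keys \<alpha> \<and> k \<noteq> b")
    case True
    then show ?thesis using le[of "{k, b}"] b b1 by (simp add: lookup_single)
  qed (use assms(3) b1 in \<open>auto simp: lookup_single when_def in_keys_iff\<close>)
qed

lemma pdiff_homogeneous_1:
  assumes "homogeneous 1 P"
  shows "pdiff b P = pconst (Poly_Mapping.lookup P (unit_exp b))"
proof -
  have "pdiff b P = (\<Sum>\<alpha>\<in>Poly_Mapping.keys P.
      if \<alpha> = unit_exp b then pmonom 0 (Poly_Mapping.lookup P \<alpha>) else 0)"
    unfolding pdiff_sum_superset[OF finite_keys subset_refl]
  proof (intro sum.cong refl)
    fix \<alpha> assume "\<alpha> \<in> Poly_Mapping.keys P"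
    then show "pmonom (\<alpha> - unit_exp b) (of_nat (Poly_Mapping.lookup \<alpha> b) * Poly_Mapping.lookup P \<alpha>)
        = (if \<alpha> = unit_exp b then pmonom 0 (Poly_Mapping.lookup P \<alpha>) else 0)"
      by (cases "Poly_Mapping.lookup \<alpha> b = 0") (auto dest: keys_homogeneous_1[OF assms])
  qed
  then show ?thesis
    by (simp add: sum.delta pconst_pmonom in_keys_iff)
qed

lemma invariant_linear_poly_central:
  assumes inv: "invariant_poly n c P" and hom: "homogeneous 1 P" and "a < n" "m < n"
  shows "(\<Sum>b<n. c a m b * Poly_Mapping.lookup P (unit_exp b)) = 0"
proof -
  have "lie_action n c a (pdiff m P) = 0"
    by (simp add: lie_action_def pdiff_homogeneous_1[OF hom])
  then have "(\<Sum>b<n. pconst (c a m b) * pdiff b P) = 0"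
    using arg_cong[OF lie_action_invariant[OF inv \<open>a < n\<close>], of "pdiff m"]
    by (simp add: pdiff_lie_action[OF \<open>m < n\<close>])
  then have "pconst (\<Sum>b<n. c a m b * Poly_Mapping.lookup P (unit_exp b)) = 0"
    by (simp add: pdiff_homogeneous_1[OF hom] pconst_pmonom mult_single single_sum)
  then show ?thesis
    by (metis lookup_single_eq lookup_zero pconst_pmonom)
qed

lemma lie_ideal_central_line:
  assumes v: "\<And>i. n \<le> i \<Longrightarrow> v i = 0"
    and central: "\<And>a k. a < n \<Longrightarrow> k < n \<Longrightarrow> (\<Sum>b<n. v b * c a b k) = 0"
  shows "lie_ideal n c (range (\<lambda>t i. t * v i))"
  unfolding lie_ideal_def
proof (intro conjI ballI allI impI)
  show "range (\<lambda>t i. t * v i) \<subseteq> lie_vecs n" using v by (auto simp: lie_vecs_def)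
  show "(\<lambda>_. 0) \<in> range (\<lambda>t i. t * v i)" using rangeI[of "\<lambda>t i. t * v i" 0] by simp
  fix w assume "w \<in> range (\<lambda>t i. t * v i)"
  then obtain t where t: "w = (\<lambda>i. t * v i)" by auto
  show "(\<lambda>i. w i + w' i) \<in> range (\<lambda>t i. t * v i)" if "w' \<in> range (\<lambda>t i. t * v i)" for w'
  proof -
    from that obtain t' where "w' = (\<lambda>i. t' * v i)" by (rule rangeE)
    then show ?thesis by (intro range_eqI[of _ _ "t + t'"]) (simp add: t distrib_right)
  qed
  show "(\<lambda>i. s * w i) \<in> range (\<lambda>t i. t * v i)" for s
    using rangeI[of "\<lambda>t i. t * v i" "s * t"] by (simp add: t mult.assoc)
  show "lie_ad n c a w \<in> range (\<lambda>t i. t * v i)" if "a < n" for a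
  proof -
    have "lie_ad n c a w = (\<lambda>i. 0 * v i)"
      using central[OF that] by (auto simp: lie_ad_def t fun_eq_iff mult.assoc simp flip: sum_distrib_left)
    then show ?thesis using rangeI[of "\<lambda>t i. t * v i" 0] by simp
  qed
qed

lemma lie_vecs_neq_line:
  assumes lie: "simple_quadratic_lie n c"
  shows "lie_vecs n \<noteq> range (\<lambda>t i. t * v i)"
proof
  assume V: "lie_vecs n = range (\<lambda>t i. t * v i)"
  obtain a b k where abk: "a < n" "b < n" "k < n" "c a b k \<noteq> 0"
    using lie_nonabelian[OF lie] .
  have "a \<noteq> b" using lie_antisym[OF lie abk(1-3)] abk(4) by auto
  then have "(\<lambda>i. if i = a then 1 else 0) \<in> lie_vecs n" "(\<lambda>i. if i = b then 1 else 0) \<in> lie_vecs n"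
    using abk by (auto simp: lie_vecs_def)
  then obtain s t where s: "(\<lambda>i. if i = a then 1 else 0) = (\<lambda>i. s * v i)"
    and t: "(\<lambda>i. if i = b then 1 else 0) = (\<lambda>i. t * v i)"
    unfolding V by (elim rangeE)
  have "s * v a = 1" "s * v b = 0" "t * v b = 1"
    using fun_cong[OF s, of a] fun_cong[OF s, of b] fun_cong[OF t, of b] \<open>a \<noteq> b\<close> by auto
  then show False by auto
qed

lemma simple_lie_center_trivial:
  assumes lie: "simple_quadratic_lie n c" and v: "\<And>i. n \<le> i \<Longrightarrow> v i = 0"
    and central: "\<And>a k. a < n \<Longrightarrow> k < n \<Longrightarrow> (\<Sum>b<n. v b * c a b k) = 0"
  shows "v = (\<lambda>_. 0)"
proof -
  have "range (\<lambda>t i. t * v i) = {\<lambda>_. 0}"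
    using lie_ideal_trivial[OF lie lie_ideal_central_line[OF v central]] lie_vecs_neq_line[OF lie]
    by auto
  then show ?thesis using rangeI[of "\<lambda>t i. t * v i" 1] by auto
qed

lemma invariant_linear_poly_eq_0:
  assumes lie: "simple_quadratic_lie n c" and inv: "invariant_poly n c P" and hom: "homogeneous 1 P"
  shows "P = 0"
proof -
  define v where "v b = (if b < n then Poly_Mapping.lookup P (unit_exp b) else 0)" for b
  have "v = (\<lambda>_. 0)"
  proof (rule simple_lie_center_trivial[OF lie])
    fix a k assume "a < n" "k < n"
    then show "(\<Sum>b<n. v b * c a b k) = 0"
      using invariant_linear_poly_central[OF inv hom \<open>a < n\<close> \<open>k < n\<close>]
      by (simp add: v_def lie_form_invariant[OF lie \<open>a < n\<close> _ \<open>k < n\<close>] sum_negf mult.commute)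
  qed (simp add: v_def)
  have "pdiff m P = 0" if "m < n" for m
    using that fun_cong[OF \<open>v = (\<lambda>_. 0)\<close>, of m] by (simp add: pdiff_homogeneous_1[OF hom] v_def pconst_pmonom)
  moreover have "(\<Sum>m<n. pvar m * pdiff m P) = of_nat 1 * P"
    using inv hom by (simp add: euler_identity invariant_poly_def)
  ultimately show "P = 0" by simp
qed

lemma sum_xy_bracket_mult:
  "(\<Sum>m<n. xy_bracket n c m * f m)
    = (\<Sum>p<n. \<Sum>q<n. xvar p * (yvar n q * (\<Sum>m<n. scalar (c p q m) * f m)))"
proof -
  have "(\<Sum>m<n. xy_bracket n c m * f m)
      = (\<Sum>m<n. \<Sum>p<n. \<Sum>q<n. scalar (c p q m) * (xvar p * (yvar n q * f m)))"
    unfolding xy_bracket_def bracket_def by (simp only: sum_distrib_right mult.assoc)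
  also have "\<dots> = (\<Sum>p<n. \<Sum>q<n. \<Sum>m<n. scalar (c p q m) * (xvar p * (yvar n q * f m)))"
    by (rule sum_rotate3)
  also have "\<dots> = (\<Sum>p<n. \<Sum>q<n. xvar p * (yvar n q * (\<Sum>m<n. scalar (c p q m) * f m)))"
    by (simp only: sum_distrib_left mult_scalar_left_commute[of "generator i" for i])
  finally show ?thesis .
qed

lemma sum_eval_xy_lie_action:
  "(\<Sum>p<n. \<Sum>q<n. xvar p * (yvar n q * eval_xy n c (lie_action n c p (H q))))
    = (\<Sum>q<n. \<Sum>b<n. bracket n c xvar (xy_bracket n c) b * (yvar n q * eval_xy n c (pdiff b (H q))))"
proof -
  let ?f = "\<lambda>p q b k. scalar (c p k b) * (xvar p * (xy_bracket n c k * (yvar n q * eval_xy n c (pdiff b (H q)))))"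
  have "(\<Sum>p<n. \<Sum>q<n. xvar p * (yvar n q * eval_xy n c (lie_action n c p (H q))))
      = (\<Sum>p<n. \<Sum>q<n. \<Sum>b<n. \<Sum>k<n. ?f p q b k)"
    by (simp only: eval_xy_lie_action sum_distrib_left mult_scalar_left_commute[of "generator i" for i]
        generator_xy_bracket_left_commute)
  also have "\<dots> = (\<Sum>q<n. \<Sum>b<n. \<Sum>p<n. \<Sum>k<n. ?f p q b k)"
    by (rule sum_rotate3)
  also have "\<dots> = (\<Sum>q<n. \<Sum>b<n. bracket n c xvar (xy_bracket n c) b * (yvar n q * eval_xy n c (pdiff b (H q))))"
    by (simp only: bracket_def sum_distrib_right mult.assoc)
  finally show ?thesis .
qed

text \<open>The Euler sum \<open>\<Sum>\<^sub>m Z\<^sub>m \<partial>\<^sub>m G({X,Y})\<close> is, modulo terms with a factor \<open>{X,{X,Y}}\<close>,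
  controlled by the infinitesimal action on \<open>G\<close>.\<close>
lemma euler_sum_eval_xy:
  "(\<Sum>m<n. xy_bracket n c m * eval_xy n c (pdiff m G))
    = (\<Sum>p<n. \<Sum>q<n. xvar p * (yvar n q * eval_xy n c (pdiff q (lie_action n c p G))))
      - (\<Sum>q<n. \<Sum>b<n. bracket n c xvar (xy_bracket n c) b * (yvar n q * eval_xy n c (pdiff b (pdiff q G))))"
proof -
  have "eval_xy n c (pdiff q (lie_action n c p G))
      = (\<Sum>m<n. scalar (c p q m) * eval_xy n c (pdiff m G)) + eval_xy n c (lie_action n c p (pdiff q G))"
    if "q < n" for p q
    by (simp add: pdiff_lie_action[OF that] eval_xy_add eval_xy_sum eval_xy_mult eval_xy_pconst)
  then have "(\<Sum>p<n. \<Sum>q<n. xvar p * (yvar n q * eval_xy n c (pdiff q (lie_action n c p G))))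
      = (\<Sum>m<n. xy_bracket n c m * eval_xy n c (pdiff m G))
        + (\<Sum>p<n. \<Sum>q<n. xvar p * (yvar n q * eval_xy n c (lie_action n c p (pdiff q G))))"
    by (simp add: distrib_left sum.distrib sum_xy_bracket_mult)
  then show ?thesis
    by (simp add: sum_eval_xy_lie_action[of n c "\<lambda>q. pdiff q G"])
qed

lemma eval_xy_invariant_in_J:
  assumes lie: "simple_quadratic_lie n c" and inv: "invariant_poly n c F"
    and hom: "homogeneous d F" and "0 < d"
  shows "in_J n c (eval_xy n c F)"
proof (rule in_J_of_nat_mult_cancel[OF \<open>0 < d\<close>])
  have "of_nat d * eval_xy n c F
      = - (\<Sum>q<n. \<Sum>b<n. bracket n c xvar (xy_bracket n c) b * (yvar n q * eval_xy n c (pdiff b (pdiff q F))))"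
    using inv hom
    by (simp add: eval_xy_euler_identity[symmetric] euler_sum_eval_xy lie_action_invariant invariant_poly_def)
  then show "in_J n c (of_nat d * eval_xy n c F)"
    by (auto intro!: in_J_uminus in_J_sum in_J_mult_right in_J_bracket_x_xy[OF lie] in_R_mult
        in_R_generator in_R_eval_xy)
qed

text \<open>For invariant \<open>F\<close>, \<open>e\<^sub>p \<cdot> \<partial>\<^sub>b F = - \<Sum>\<^sub>j c\<^sub>p\<^sub>b\<^sub>j \<partial>\<^sub>j F\<close>, and the resulting sum recombines
  into coefficients of \<open>{X, X}\<close>.\<close>
lemma sum_lie_action_pdiff_in_J:
  assumes inv: "invariant_poly n c F"
  shows "in_J n c (\<Sum>b<n. (\<Sum>p<n. \<Sum>q<n. xvar p * (yvar n q * eval_xy n c (pdiff q (lie_action n c p (pdiff b F))))) * xvar b)"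
proof -
  let ?\<phi> = "\<lambda>q j. eval_xy n c (pdiff q (pdiff j F))"
  let ?f = "\<lambda>b p q j. scalar (c p b j) * (xvar p * (xvar b * (yvar n q * ?\<phi> q j)))"
  have "xvar p * (yvar n q * eval_xy n c (pdiff q (lie_action n c p (pdiff b F)))) * xvar b
      = (\<Sum>j<n. ?f b p q j)" if "p < n" "b < n" for p q b
  proof -
    have "lie_action n c p (pdiff b F) = - (\<Sum>j<n. pconst (c p b j) * pdiff j F)"
      using arg_cong[OF lie_action_invariant[OF inv \<open>p < n\<close>], of "pdiff b"]
      by (simp add: pdiff_lie_action[OF \<open>b < n\<close>] eq_neg_iff_add_eq_0 add.commute)
    then have "eval_xy n c (pdiff q (lie_action n c p (pdiff b F))) = - (\<Sum>j<n. scalar (c p b j) * ?\<phi> q j)"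
      by (simp add: pdiff_uminus pdiff_sum pdiff_pconst_mult eval_xy_uminus eval_xy_sum eval_xy_mult
          eval_xy_pconst)
    then show ?thesis
      by (simp add: sum_distrib_left sum_distrib_right mult.assoc sum_negf
          mult_scalar_left_commute[of "generator i" for i] eval_xy_generator_commute
          generator_left_anticommute[of "n + q" b])
  qed
  then have "(\<Sum>b<n. (\<Sum>p<n. \<Sum>q<n. xvar p * (yvar n q * eval_xy n c (pdiff q (lie_action n c p (pdiff b F))))) * xvar b)
      = (\<Sum>b<n. \<Sum>p<n. \<Sum>q<n. \<Sum>j<n. ?f b p q j)"
    by (simp add: sum_distrib_right)
  also have "\<dots> = (\<Sum>q<n. \<Sum>j<n. \<Sum>p<n. \<Sum>b<n. ?f b p q j)"
    by (rule sum_rotate4)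
  also have "\<dots> = (\<Sum>q<n. \<Sum>j<n. bracket n c xvar xvar j * (yvar n q * ?\<phi> q j))"
    by (simp only: bracket_def sum_distrib_right mult.assoc)
  finally show ?thesis
    by (auto intro!: in_J_sum in_J_mult_right in_J_bracket_xx in_R_mult in_R_generator in_R_eval_xy)
qed

lemma sum_eval_xy_pdiff_generator_in_J:
  assumes lie: "simple_quadratic_lie n c" and inv: "invariant_poly n c F"
    and hom: "homogeneous d F" and "0 < d"
  shows "in_J n c (\<Sum>b<n. eval_xy n c (pdiff b F) * xvar b)"
proof (cases "d = 1")
  case True
  then show ?thesis
    using invariant_linear_poly_eq_0[OF lie inv] hom by simp
next
  case False
  with \<open>0 < d\<close> have "0 < d - 1" by simp
  then show ?thesis
  proof (rule in_J_of_nat_mult_cancel)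
    have piv: "poly_in_vars n F" using inv by (simp add: invariant_poly_def)
    have "of_nat (d - 1) * (\<Sum>b<n. eval_xy n c (pdiff b F) * xvar b)
        = (\<Sum>b<n. (\<Sum>m<n. xy_bracket n c m * eval_xy n c (pdiff m (pdiff b F))) * xvar b)"
      using \<open>0 < d\<close>
      by (simp add: eval_xy_euler_identity_pdiff[OF piv hom] sum_distrib_left mult.assoc of_nat_diff)
    also have "\<dots> = (\<Sum>b<n. (\<Sum>p<n. \<Sum>q<n. xvar p * (yvar n q * eval_xy n c (pdiff q (lie_action n c p (pdiff b F))))) * xvar b)
        - (\<Sum>b<n. (\<Sum>q<n. \<Sum>j<n. bracket n c xvar (xy_bracket n c) j * (yvar n q * eval_xy n c (pdiff j (pdiff q (pdiff b F))))) * xvar b)"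
      by (simp only: euler_sum_eval_xy left_diff_distrib sum_subtractf)
    finally show "in_J n c (of_nat (d - 1) * (\<Sum>b<n. eval_xy n c (pdiff b F) * xvar b))"
      by (auto intro!: in_J_diff sum_lie_action_pdiff_in_J[OF inv] in_J_sum in_J_mult_right
          in_J_bracket_x_xy[OF lie] in_R_mult in_R_generator in_R_eval_xy)
  qed
qed

theorem proposition2p2:
  fixes n :: nat and c :: "nat \<Rightarrow> nat \<Rightarrow> nat \<Rightarrow> complex" and F H :: cpoly and d e :: nat
  assumes "simple_quadratic_lie n c"
    and "invariant_poly n c F" and "homogeneous d F" and "0 < d"
    and "invariant_poly n c H" and "homogeneous e H" and "0 < e"
  shows "Fhat n c (F * H) \<in> Jideal n c"
proof -
  have sum_in_J: "in_J n c (\<Sum>b<n. eval_xy n c (pdiff b P) * S * yvar n b)" if "in_J n c S" for P S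
    using that
    by (auto intro!: in_J_sum in_J_mult_right[OF in_R_generator] in_J_mult_left[OF in_R_eval_xy])
  have "in_J n c (Fhat_grassmann n c (F * H))"
    unfolding Fhat_grassmann_mult
    by (intro in_J_add in_J_mult_right[OF in_R_Fhat_grassmann] sum_in_J
        eval_xy_invariant_in_J[OF assms(1-4)] eval_xy_invariant_in_J[OF assms(1,5-7)]
        sum_eval_xy_pdiff_generator_in_J[OF assms(1-4)] sum_eval_xy_pdiff_generator_in_J[OF assms(1,5-7)])
  then show ?thesis
    by (simp add: in_J_def Fhat_eq_grass_of)
qed

end
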